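(* Consider the gGASP instance with players $N=\{1,2,3\}$, non-void activities $A^*=\{a,b,c\}$, links $L=\{\{1,2\},\{2,3\}\}$ (a path), and preferences (listing only approved alternatives and $(a_\emptyset,1)$; all unlisted alternatives are ranked strictly below $(a_\emptyset,1)$): player 1: $(b,2)\succ(a,1)\succ(c,3)\succ(c,2)\succ(c,1)\succ(a_\emptyset,1)$; player 2: $(c,3)\succ(c,2)\succ(a,2)\succ(b,2)\succ(b,1)\succ(a_\emptyset,1)$; player 3: $(c,3)\succ(a,2)\succ(a,1)\succ(a_\emptyset,1)$. Then this instance admits no individually stable feasible assignment.
   Context: In a gGASP instance with players $N=[n]$, activities $A=A^*\cup\{a_\emptyset\}$ ($a_\emptyset$ the void activity), preferences $\succeq_i$ over $X=(A^*\times[n])\cup\{(a_\emptyset,1)\}$ and links $L$: a feasible assignment is a map $\pi:N\to A$ such that each $\pi^a=\{i:\pi(i)=a\}$, $a\in A^*$, is connected in $(N,L)$ (empty allowed). $\pi_i=\pi^{\pi(i)}$ if $\pi(i)\neq a_\emptyset$, else $\pi_i=\{i\}$. $\pi$ is individually rational if $(\pi(i),|\pi_i|)\succeq_i(a_\emptyset,1)$ for all $i$. Player $i$ has an NS-deviation to $a\in A^*\setminus\{\pi(i)\}$ if $\pi^a\cup\{i\}$ is connected and $(a,|\pi^a|+1)\succ_i(\pi(i),|\pi_i|)$; it is an IS-deviation if moreover $(a,|\pi^a|+1)\succeq_j(a,|\pi^a|)$ for all $j\in\pi^a$. $\pi$ is individually stable if it is individually rational and no player has an IS-deviation. *)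

theory Defs
  imports Main
begin

text \<open>Players of type 'p, non-void activities of type 'a;
 an activity is 'a option, None being the void activity. Preferences are given as
 a weak preference relation pref i x y meaning x is weakly preferred to y by i,
 on alternatives (activity, size). Links L are unordered pairs (2-element sets).\<close>

definition connected_in :: "'p set set \<Rightarrow> 'p set \<Rightarrow> bool" where
  "connected_in L S \<longleftrightarrow>
     (\<forall>x\<in>S. \<forall>y\<in>S. (x, y) \<in> ({(u, v). u \<in> S \<and> v \<in> S \<and> {u, v} \<in> L})\<^sup>*)"

definition coalition :: "'p set \<Rightarrow> ('p \<Rightarrow> 'a option) \<Rightarrow> 'a \<Rightarrow> 'p set" where
  "coalition N \<pi> a = {i \<in> N. \<pi> i = Some a}"

definition feasible ::
  "'p set \<Rightarrow> 'a set \<Rightarrow> 'p set set \<Rightarrow> ('p \<Rightarrow> 'a option) \<Rightarrow> bool" where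
  "feasible N Astar L \<pi> \<longleftrightarrow>
     (\<forall>i\<in>N. \<pi> i = None \<or> (\<exists>a\<in>Astar. \<pi> i = Some a)) \<and>
     (\<forall>a\<in>Astar. connected_in L (coalition N \<pi> a))"

definition own_size :: "'p set \<Rightarrow> ('p \<Rightarrow> 'a option) \<Rightarrow> 'p \<Rightarrow> nat" where
  "own_size N \<pi> i = (case \<pi> i of None \<Rightarrow> 1 | Some a \<Rightarrow> card (coalition N \<pi> a))"

definition strict_pref ::
  "('p \<Rightarrow> ('a option \<times> nat) \<Rightarrow> ('a option \<times> nat) \<Rightarrow> bool) \<Rightarrow> 'p \<Rightarrow> ('a option \<times> nat) \<Rightarrow> ('a option \<times> nat) \<Rightarrow> bool" where
  "strict_pref pref i x y \<longleftrightarrow> pref i x y \<and> \<not> pref i y x"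

definition individually_rational ::
  "'p set \<Rightarrow> ('p \<Rightarrow> ('a option \<times> nat) \<Rightarrow> ('a option \<times> nat) \<Rightarrow> bool) \<Rightarrow> ('p \<Rightarrow> 'a option) \<Rightarrow> bool" where
  "individually_rational N pref \<pi> \<longleftrightarrow>
     (\<forall>i\<in>N. pref i (\<pi> i, own_size N \<pi> i) (None, 1))"

definition NS_deviation ::
  "'p set \<Rightarrow> 'a set \<Rightarrow> 'p set set \<Rightarrow> ('p \<Rightarrow> ('a option \<times> nat) \<Rightarrow> ('a option \<times> nat) \<Rightarrow> bool)
   \<Rightarrow> ('p \<Rightarrow> 'a option) \<Rightarrow> 'p \<Rightarrow> 'a \<Rightarrow> bool" where
  "NS_deviation N Astar L pref \<pi> i a \<longleftrightarrow>
     a \<in> Astar \<and> \<pi> i \<noteq> Some a \<and>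
     connected_in L (coalition N \<pi> a \<union> {i}) \<and>
     strict_pref pref i (Some a, card (coalition N \<pi> a) + 1) (\<pi> i, own_size N \<pi> i)"

definition IS_deviation ::
  "'p set \<Rightarrow> 'a set \<Rightarrow> 'p set set \<Rightarrow> ('p \<Rightarrow> ('a option \<times> nat) \<Rightarrow> ('a option \<times> nat) \<Rightarrow> bool)
   \<Rightarrow> ('p \<Rightarrow> 'a option) \<Rightarrow> 'p \<Rightarrow> 'a \<Rightarrow> bool" where
  "IS_deviation N Astar L pref \<pi> i a \<longleftrightarrow>
     NS_deviation N Astar L pref \<pi> i a \<and>
     (\<forall>j\<in>coalition N \<pi> a.
        pref j (Some a, card (coalition N \<pi> a) + 1) (Some a, card (coalition N \<pi> a)))"

definition individually_stable ::
  "'p set \<Rightarrow> 'a set \<Rightarrow> 'p set set \<Rightarrow> ('p \<Rightarrow> ('a option \<times> nat) \<Rightarrow> ('a option \<times> nat) \<Rightarrow> bool)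
   \<Rightarrow> ('p \<Rightarrow> 'a option) \<Rightarrow> bool" where
  "individually_stable N Astar L pref \<pi> \<longleftrightarrow>
     individually_rational N pref \<pi> \<and>
     (\<forall>i\<in>N. \<forall>a\<in>Astar. \<not> IS_deviation N Astar L pref \<pi> i a)"

datatype act = Act_a | Act_b | Act_c

text \<open>Ranks: higher is better; (void,1) has rank 1, unapproved alternatives rank 0
 (they are all below the void alternative, mutually indifferent).\<close>

definition ex_rank :: "nat \<Rightarrow> (act option \<times> nat) \<Rightarrow> nat" where
  "ex_rank i x =
    (if x = (None, 1) then 1
     else if i = 1 then
       (if x = (Some Act_b, 2) then 7 else if x = (Some Act_a, 1) then 6
        else if x = (Some Act_c, 3) then 5 else if x = (Some Act_c, 2) then 4
        else if x = (Some Act_c, 1) then 3 else 0)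
     else if i = 2 then
       (if x = (Some Act_c, 3) then 7 else if x = (Some Act_c, 2) then 6
        else if x = (Some Act_a, 2) then 5 else if x = (Some Act_b, 2) then 4
        else if x = (Some Act_b, 1) then 3 else 0)
     else if i = 3 then
       (if x = (Some Act_c, 3) then 7 else if x = (Some Act_a, 2) then 6
        else if x = (Some Act_a, 1) then 5 else 0)
     else 0)"

definition ex_pref :: "nat \<Rightarrow> (act option \<times> nat) \<Rightarrow> (act option \<times> nat) \<Rightarrow> bool" where
  "ex_pref i x y \<longleftrightarrow> ex_rank i x \<ge> ex_rank i y"

definition ex_N :: "nat set" where "ex_N = {1, 2, 3}"
definition ex_A :: "act set" where "ex_A = {Act_a, Act_b, Act_c}"
definition ex_L :: "nat set set" where "ex_L = {{1, 2}, {2, 3}}"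

end

theory Submission
  imports Defs
begin

text \<open>Individual rationality leaves player 3 three options. In the grand coalition for \<open>c\<close>,
  player 1 leaves for \<open>(a,1)\<close>. Staying void, player 3 is invited to \<open>a\<close> unless player 1
  occupies \<open>a\<close>, and then one of players 1, 2 moves to \<open>b\<close>. So player 3 plays \<open>a\<close>. If player 2
  joins him, player 1 is void or alone in \<open>c\<close> and a move to \<open>c\<close> follows; otherwise player 2
  moves to \<open>(a,2)\<close> unless players 1 and 2 share \<open>c\<close>, and then player 3 joins them, welcome to
  both.\<close>

lemma connected_in_subsingleton: "S \<subseteq> {x} \<Longrightarrow> connected_in L S"
  unfolding connected_in_def by auto

lemma connected_in_star:
  assumes "c \<in> S" and "\<And>x. x \<in> S \<Longrightarrow> x = c \<or> {x, c} \<in> L"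
  shows "connected_in L S"
proof -
  let ?R = "{(u, v). u \<in> S \<and> v \<in> S \<and> {u, v} \<in> L}"
  have "x = c \<or> (x, c) \<in> ?R \<and> (c, x) \<in> ?R" if "x \<in> S" for x
    using assms(1) assms(2)[OF that] that insert_commute[of x c "{}"] by auto
  then have to_c: "(x, c) \<in> ?R\<^sup>*" and from_c: "(c, x) \<in> ?R\<^sup>*" if "x \<in> S" for x
    using that by auto
  show ?thesis
    unfolding connected_in_def using to_c from_c by (meson rtrancl_trans)
qed

lemma connected_in_has_neighbour:
  assumes "connected_in L S" "x \<in> S" "y \<in> S" "x \<noteq> y"
  shows "\<exists>z\<in>S. {x, z} \<in> L"
proof -
  let ?R = "{(u, v). u \<in> S \<and> v \<in> S \<and> {u, v} \<in> L}"
  have "(x, y) \<in> ?R\<^sup>*" using assms(1-3) unfolding connected_in_def by blast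
  then obtain z where "(x, z) \<in> ?R" using assms(4) by (meson converse_rtranclE)
  then show ?thesis by blast
qed

lemma ex_L_edges: "{1, 2} \<in> ex_L" "{3, 2} \<in> ex_L"
  unfolding ex_L_def by (simp_all add: insert_commute)

lemma ex_L_neighbour_of_1: "{1, z} \<in> ex_L \<Longrightarrow> z = 2"
  unfolding ex_L_def by (auto simp: doubleton_eq_iff)

lemma connected_in_ex_L_iff:
  assumes "S \<subseteq> {1, 2, 3}"
  shows "connected_in ex_L S \<longleftrightarrow> (1 \<in> S \<and> 3 \<in> S \<longrightarrow> 2 \<in> S)"
proof
  assume "connected_in ex_L S"
  then show "1 \<in> S \<and> 3 \<in> S \<longrightarrow> 2 \<in> S"
    using connected_in_has_neighbour[of ex_L S 1 3] ex_L_neighbour_of_1 by fastforce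
next
  assume path: "1 \<in> S \<and> 3 \<in> S \<longrightarrow> 2 \<in> S"
  show "connected_in ex_L S"
  proof (cases "2 \<in> S")
    case True
    have "x = 2 \<or> {x, 2} \<in> ex_L" if "x \<in> S" for x
      using assms that ex_L_edges by blast
    with True show ?thesis by (rule connected_in_star)
  next
    case False
    then have "S \<subseteq> {1} \<or> S \<subseteq> {3}" using assms path by auto
    then show ?thesis using connected_in_subsingleton by metis
  qed
qed

lemma coalition_ex_N: "coalition ex_N \<pi> a = {i \<in> {1, 2, 3}. \<pi> i = Some a}"
  unfolding coalition_def ex_N_def by simp

lemma card_coalition_ex_N:
  "card (coalition ex_N \<pi> a) =
     of_bool (\<pi> 1 = Some a) + of_bool (\<pi> 2 = Some a) + of_bool (\<pi> 3 = Some a)"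
  unfolding coalition_ex_N
  by (cases "\<pi> 1 = Some a"; cases "\<pi> 2 = Some a"; cases "\<pi> 3 = Some a")
     (simp_all add: Collect_disj_eq Collect_conj_eq insert_commute)

lemma connected_in_coalition_ex_L:
  "connected_in ex_L (coalition ex_N \<pi> a) \<longleftrightarrow> (\<pi> 1 = Some a \<and> \<pi> 3 = Some a \<longrightarrow> \<pi> 2 = Some a)"
  by (subst connected_in_ex_L_iff) (auto simp: coalition_ex_N)

lemma IS_deviation_ex_iff:
  assumes "i \<in> {1, 2, 3}"
  shows "IS_deviation ex_N ex_A ex_L ex_pref \<pi> i a \<longleftrightarrow>
    \<pi> i \<noteq> Some a \<and>
    ((i = 1 \<or> \<pi> 1 = Some a) \<and> (i = 3 \<or> \<pi> 3 = Some a) \<longrightarrow> i = 2 \<or> \<pi> 2 = Some a) \<and>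
    ex_rank i (\<pi> i, own_size ex_N \<pi> i) < ex_rank i (Some a, card (coalition ex_N \<pi> a) + 1) \<and>
    (\<forall>j\<in>{1, 2, 3}. \<pi> j = Some a \<longrightarrow>
       ex_rank j (Some a, card (coalition ex_N \<pi> a)) \<le> ex_rank j (Some a, card (coalition ex_N \<pi> a) + 1))"
proof -
  have "a \<in> ex_A" by (cases a) (auto simp: ex_A_def)
  have "coalition ex_N \<pi> a \<union> {i} \<subseteq> {1, 2, 3}"
    using assms by (auto simp: coalition_ex_N)
  then have connected: "connected_in ex_L (coalition ex_N \<pi> a \<union> {i}) \<longleftrightarrow>
      ((i = 1 \<or> \<pi> 1 = Some a) \<and> (i = 3 \<or> \<pi> 3 = Some a) \<longrightarrow> i = 2 \<or> \<pi> 2 = Some a)"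
    by (simp add: connected_in_ex_L_iff coalition_ex_N eq_commute[of _ i])
  have members: "(\<forall>j\<in>coalition ex_N \<pi> a. Q j) \<longleftrightarrow> (\<forall>j\<in>{1, 2, 3}. \<pi> j = Some a \<longrightarrow> Q j)" for Q
    by (auto simp: coalition_ex_N)
  show ?thesis
    unfolding IS_deviation_def NS_deviation_def strict_pref_def ex_pref_def connected members
      less_le_not_le[symmetric]
    using \<open>a \<in> ex_A\<close> by simp
qed

lemma individually_rational_ex_rank:
  assumes "individually_rational ex_N ex_pref \<pi>" "i \<in> {1, 2, 3}"
  shows "1 \<le> ex_rank i (\<pi> i, own_size ex_N \<pi> i)"
proof -
  have "ex_rank i (None, 1) = 1" by (simp add: ex_rank_def)
  with assms show ?thesis
    unfolding individually_rational_def ex_pref_def ex_N_def by metis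
qed

lemma act_option_cases [case_names None a b c]:
  "(x = None \<Longrightarrow> P) \<Longrightarrow> (x = Some Act_a \<Longrightarrow> P) \<Longrightarrow> (x = Some Act_b \<Longrightarrow> P)
    \<Longrightarrow> (x = Some Act_c \<Longrightarrow> P) \<Longrightarrow> P"
  by (metis act.exhaust option.exhaust)

lemmas ex_simps = IS_deviation_ex_iff own_size_def card_coalition_ex_N ex_rank_def

context
  fixes \<pi> :: "nat \<Rightarrow> act option"
  assumes feasible: "feasible ex_N ex_A ex_L \<pi>"
    and stable: "individually_stable ex_N ex_A ex_L ex_pref \<pi>"
begin

lemma ex_path_coalition: "\<pi> 1 = Some a \<Longrightarrow> \<pi> 3 = Some a \<Longrightarrow> \<pi> 2 = Some a"
  using feasible connected_in_coalition_ex_L[of \<pi> a]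
  by (cases a) (auto simp: feasible_def ex_A_def)

lemma ex_rational: "i \<in> {1, 2, 3} \<Longrightarrow> 1 \<le> ex_rank i (\<pi> i, own_size ex_N \<pi> i)"
  using stable individually_rational_ex_rank unfolding individually_stable_def by blast

lemma ex_no_IS_deviation: "i \<in> {1, 2, 3} \<Longrightarrow> \<not> IS_deviation ex_N ex_A ex_L ex_pref \<pi> i a"
  using stable unfolding individually_stable_def ex_N_def ex_A_def by (cases a) auto

lemma ex_stable_player3_not_void: "\<pi> 3 \<noteq> None"
proof
  assume \<pi>3: "\<pi> 3 = None"
  show False
  proof (cases "\<pi> 1 = Some Act_a")
    case False
    with \<pi>3 have "IS_deviation ex_N ex_A ex_L ex_pref \<pi> 3 Act_a"
      by (cases "\<pi> 1" rule: act_option_cases; cases "\<pi> 2" rule: act_option_cases)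
         (simp_all add: ex_simps)
    with ex_no_IS_deviation show False by simp
  next
    case \<pi>1: True
    show False
    proof (cases "\<pi> 2" rule: act_option_cases)
      case None
      with \<pi>1 \<pi>3 have "IS_deviation ex_N ex_A ex_L ex_pref \<pi> 2 Act_b" by (simp add: ex_simps)
      with ex_no_IS_deviation show False by simp
    next
      case b
      with \<pi>1 \<pi>3 have "IS_deviation ex_N ex_A ex_L ex_pref \<pi> 1 Act_b" by (simp add: ex_simps)
      with ex_no_IS_deviation show False by simp
    qed (use ex_rational[of 1] ex_rational[of 2] \<pi>1 \<pi>3 in \<open>simp_all add: ex_simps\<close>)
  qed
qed

lemma ex_stable_player3_not_c: "\<pi> 3 \<noteq> Some Act_c"
proof
  assume \<pi>3: "\<pi> 3 = Some Act_c"
  with ex_rational[of 3] have "\<pi> 1 = Some Act_c \<and> \<pi> 2 = Some Act_c"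
    by (cases "\<pi> 1 = Some Act_c"; cases "\<pi> 2 = Some Act_c") (simp_all add: ex_simps)
  with \<pi>3 have "IS_deviation ex_N ex_A ex_L ex_pref \<pi> 1 Act_a" by (simp add: ex_simps)
  with ex_no_IS_deviation show False by simp
qed

lemma ex_stable_player3_a: "\<pi> 3 = Some Act_a"
  using ex_rational[of 3] ex_stable_player3_not_void ex_stable_player3_not_c
  by (cases "\<pi> 3" rule: act_option_cases) (simp_all add: ex_simps)

lemma ex_stable_player2_not_a: "\<pi> 2 \<noteq> Some Act_a"
proof
  assume \<pi>2: "\<pi> 2 = Some Act_a"
  note \<pi>3 = ex_stable_player3_a
  show False
  proof (cases "\<pi> 1" rule: act_option_cases)
    case None
    with \<pi>2 \<pi>3 have "IS_deviation ex_N ex_A ex_L ex_pref \<pi> 1 Act_c" by (simp add: ex_simps)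
    with ex_no_IS_deviation show False by simp
  next
    case c
    with \<pi>2 \<pi>3 have "IS_deviation ex_N ex_A ex_L ex_pref \<pi> 2 Act_c" by (simp add: ex_simps)
    with ex_no_IS_deviation show False by simp
  qed (use ex_rational[of 1] \<pi>2 \<pi>3 in \<open>simp_all add: ex_simps\<close>)
qed

lemma ex_stable_players12_c: "\<pi> 1 = Some Act_c \<and> \<pi> 2 = Some Act_c"
proof (rule ccontr)
  assume not_c: "\<not> (\<pi> 1 = Some Act_c \<and> \<pi> 2 = Some Act_c)"
  note \<pi>3 = ex_stable_player3_a and \<pi>2 = ex_stable_player2_not_a
  with ex_path_coalition have "\<pi> 1 \<noteq> Some Act_a" by blast
  with not_c \<pi>2 \<pi>3 have "IS_deviation ex_N ex_A ex_L ex_pref \<pi> 2 Act_a"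
    by (cases "\<pi> 1" rule: act_option_cases; cases "\<pi> 2" rule: act_option_cases)
       (simp_all add: ex_simps)
  with ex_no_IS_deviation show False by simp
qed

end

theorem mainTheorem4:
  shows "\<not> (\<exists>\<pi> :: nat \<Rightarrow> act option.
            feasible ex_N ex_A ex_L \<pi> \<and> individually_stable ex_N ex_A ex_L ex_pref \<pi>)"
proof
  assume "\<exists>\<pi> :: nat \<Rightarrow> act option.
            feasible ex_N ex_A ex_L \<pi> \<and> individually_stable ex_N ex_A ex_L ex_pref \<pi>"
  then obtain \<pi> :: "nat \<Rightarrow> act option"
    where feasible: "feasible ex_N ex_A ex_L \<pi>"
      and stable: "individually_stable ex_N ex_A ex_L ex_pref \<pi>"
    by blast
  have "IS_deviation ex_N ex_A ex_L ex_pref \<pi> 3 Act_c"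
    using ex_stable_player3_a[OF feasible stable] ex_stable_players12_c[OF feasible stable]
    by (simp add: ex_simps)
  with ex_no_IS_deviation[OF feasible stable] show False by simp
qed

end
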